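(* Let $G=(V,E)$ be a finite, simple, undirected graph with $m=|E|\ge 1$ edges, and let $\mathcal{C}_1,\mathcal{C}_2\subseteq V$ be disjoint nonempty sets with $2m_i^{(1)}+m_e^{(1)}>0$ and $2m_i^{(2)}+m_e^{(2)}>0$, where $m_i^{(j)}$ is the number of edges with both endpoints in $\mathcal{C}_j$ and $m_e^{(j)}$ is the number of edges with exactly one endpoint in $\mathcal{C}_j$ (including edges to the other set). Let $m_e^{(12)}$ be the number of edges with one endpoint in $\mathcal{C}_1$ and the other in $\mathcal{C}_2$, and let $\mathcal{C}=\mathcal{C}_1\cup\mathcal{C}_2$. Then $\Delta\mathcal{P}^{\star}:=\mathcal{P}^{\star}_{\mathcal{C}}-\left(\mathcal{P}^{\star}_{\mathcal{C}_1}+\mathcal{P}^{\star}_{\mathcal{C}_2}\right)>0$ if and only if $$m_e^{(12)}>\frac{2m_i^{(2)}+m_e^{(2)}}{2m_i^{(1)}+m_e^{(1)}}\,m_i^{(1)}+\frac{2m_i^{(1)}+m_e^{(1)}}{2m_i^{(2)}+m_e^{(2)}}\,m_i^{(2)}.$$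
   Context: For a subset $\mathcal{D}\subseteq V$, let $m_i(\mathcal{D})$ be the number of edges with both endpoints in $\mathcal{D}$ and $m_e(\mathcal{D})$ the number of edges with exactly one endpoint in $\mathcal{D}$. The null-adjusted persistence of $\mathcal{D}$ is $\mathcal{P}^{\star}_{\mathcal{D}}=\frac{2m_i(\mathcal{D})}{2m_i(\mathcal{D})+m_e(\mathcal{D})}-\frac{2m_i(\mathcal{D})+m_e(\mathcal{D})}{2m}$, where $m=|E|$. *)

theory Defs
  imports Main "HOL-Library.Disjoint_Sets" Complex_Main
begin

definition simple_graph :: "'a set \<Rightarrow> 'a set set \<Rightarrow> bool" where
  "simple_graph V E \<longleftrightarrow> finite V \<and> (\<forall>e\<in>E. e \<subseteq> V \<and> card e = 2)"

definition m_int :: "'a set set \<Rightarrow> 'a set \<Rightarrow> nat" where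
  "m_int E D = card {e \<in> E. e \<subseteq> D}"

definition m_ext :: "'a set set \<Rightarrow> 'a set \<Rightarrow> nat" where
  "m_ext E D = card {e \<in> E. card (e \<inter> D) = 1}"

definition m_cross :: "'a set set \<Rightarrow> 'a set \<Rightarrow> 'a set \<Rightarrow> nat" where
  "m_cross E A B = card {e \<in> E. e \<inter> A \<noteq> {} \<and> e \<inter> B \<noteq> {}}"

definition persistence :: "'a set set \<Rightarrow> 'a set \<Rightarrow> real" where
  "persistence E D =
     2 * real (m_int E D) / (2 * real (m_int E D) + real (m_ext E D))
     - (2 * real (m_int E D) + real (m_ext E D)) / (2 * real (card E))"

end

theory Submission
  imports Defs
begin

text \<open>The volume 2 m_i + m_e of a vertex set is the sum of the degrees of its vertices, hence
  additive over disjoint sets. The null term of the persistence is linear in the volume, so it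
  cancels in the difference for every m. Since moreover
  m_i(C1 \<union> C2) = a1 + a2 + x with a_j = m_i(C_j) and x = m_e(12), writing K, L for the volumes
  of C1, C2 the difference is
  2(a1 + a2 + x)/(K + L) - 2 a1/K - 2 a2/L = 2(x K L - a1 L^2 - a2 K^2) / ((K + L) K L).\<close>

definition volume :: "'a set set \<Rightarrow> 'a set \<Rightarrow> nat" where
  "volume E D = 2 * m_int E D + m_ext E D"

lemma simple_graph_finite_edges:
  assumes "simple_graph V E"
  shows "finite E"
proof -
  have "E \<subseteq> Pow V" "finite V" using assms unfolding simple_graph_def by blast+
  then show ?thesis using finite_subset by blast
qed

lemma simple_graph_edgeE:
  assumes "simple_graph V E" "e \<in> E"
  obtains u v where "e = {u, v}" "u \<noteq> v"
  using assms unfolding simple_graph_def by (meson card_2_iff)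

lemma card_filter_eq_sum:
  assumes "finite S"
  shows "card {x \<in> S. P x} = (\<Sum>x\<in>S. if P x then 1 else 0)"
  using assms by (simp add: sum.If_cases Int_def)

lemma volume_eq_sum_card_inter:
  assumes "simple_graph V E"
  shows "volume E D = (\<Sum>e\<in>E. card (e \<inter> D))"
proof -
  have per_edge: "2 * (if e \<subseteq> D then 1 else 0) + (if card (e \<inter> D) = 1 then 1 else 0)
      = card (e \<inter> D)" if "e \<in> E" for e
  proof -
    obtain u v where "e = {u, v}" "u \<noteq> v" using simple_graph_edgeE[OF assms \<open>e \<in> E\<close>] .
    then show ?thesis by (cases "u \<in> D"; cases "v \<in> D") auto
  qed
  have "finite E" using simple_graph_finite_edges[OF assms] .
  then have "volume E D
      = (\<Sum>e\<in>E. 2 * (if e \<subseteq> D then 1 else 0) + (if card (e \<inter> D) = 1 then 1 else 0))"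
    by (simp add: volume_def m_int_def m_ext_def card_filter_eq_sum sum.distrib sum_distrib_left)
  also have "\<dots> = (\<Sum>e\<in>E. card (e \<inter> D))" using per_edge by (rule sum.cong[OF refl])
  finally show ?thesis .
qed

lemma volume_Un_disjoint:
  assumes "simple_graph V E" "A \<inter> B = {}"
  shows "volume E (A \<union> B) = volume E A + volume E B"
proof -
  have "card (e \<inter> (A \<union> B)) = card (e \<inter> A) + card (e \<inter> B)" if "e \<in> E" for e
  proof -
    obtain u v where "e = {u, v}" using simple_graph_edgeE[OF assms(1) \<open>e \<in> E\<close>] .
    then have "finite e" by simp
    then show ?thesis using assms(2) by (simp add: Int_Un_distrib card_Un_disjoint disjoint_iff)
  qed
  then show ?thesis by (simp add: volume_eq_sum_card_inter[OF assms(1)] flip: sum.distrib)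
qed

lemma m_int_Un_disjoint:
  assumes "simple_graph V E" "A \<inter> B = {}"
  shows "m_int E (A \<union> B) = m_int E A + m_int E B + m_cross E A B"
proof -
  have "(if e \<subseteq> A \<union> B then 1 else 0) = (if e \<subseteq> A then 1 else 0) + (if e \<subseteq> B then 1 else 0)
      + (if e \<inter> A \<noteq> {} \<and> e \<inter> B \<noteq> {} then 1 else (0::nat))" if "e \<in> E" for e
  proof -
    obtain u v where "e = {u, v}" "u \<noteq> v" using simple_graph_edgeE[OF assms(1) \<open>e \<in> E\<close>] .
    then show ?thesis
      using assms(2)
      by (cases "u \<in> A"; cases "v \<in> A"; cases "u \<in> B"; cases "v \<in> B") (auto simp: insert_subset)
  qed
  then show ?thesis
    using simple_graph_finite_edges[OF assms(1)]
    by (simp add: m_int_def m_cross_def card_filter_eq_sum flip: sum.distrib)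
qed

lemma persistence_eq_volume:
  "persistence E D = 2 * real (m_int E D) / real (volume E D) - real (volume E D) / (2 * real (card E))"
  by (simp add: persistence_def volume_def)

lemma persistence_Un_disjoint_diff:
  assumes "simple_graph V E" "A \<inter> B = {}"
  shows "persistence E (A \<union> B) - (persistence E A + persistence E B)
    = 2 * (real (m_int E A) + real (m_int E B) + real (m_cross E A B))
        / (real (volume E A) + real (volume E B))
      - 2 * real (m_int E A) / real (volume E A) - 2 * real (m_int E B) / real (volume E B)"
  by (simp add: persistence_eq_volume m_int_Un_disjoint[OF assms] volume_Un_disjoint[OF assms]
      add_divide_distrib)

lemma merge_gain_pos_iff:
  fixes K L a1 a2 x :: real
  assumes "K > 0" "L > 0"
  shows "2 * (a1 + a2 + x) / (K + L) - 2 * a1 / K - 2 * a2 / L > 0 \<longleftrightarrow> x > L / K * a1 + K / L * a2"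
proof -
  have denom_pos: "(K + L) * K * L > 0" using assms by simp
  have "2 * (a1 + a2 + x) / (K + L) - 2 * a1 / K - 2 * a2 / L
      = 2 * (x * K * L - a1 * L ^ 2 - a2 * K ^ 2) / ((K + L) * K * L)"
    using assms by (simp add: divide_simps) (simp add: algebra_simps power2_eq_square)
  also have "\<dots> > 0 \<longleftrightarrow> a1 * L ^ 2 + a2 * K ^ 2 < x * (K * L)"
    by (subst pos_less_divide_eq[OF denom_pos]) (simp add: algebra_simps, linarith)
  also have "\<dots> \<longleftrightarrow> L / K * a1 + K / L * a2 < x"
    using assms by (simp add: divide_simps power2_eq_square algebra_simps)
  finally show ?thesis .
qed

theorem proposition5:
  fixes V :: "'a set" and E :: "'a set set" and C1 C2 :: "'a set"
  assumes "simple_graph V E"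
    and "card E \<ge> 1"
    and "C1 \<subseteq> V" and "C2 \<subseteq> V"
    and "C1 \<inter> C2 = {}"
    and "C1 \<noteq> {}" and "C2 \<noteq> {}"
    and "2 * m_int E C1 + m_ext E C1 > 0"
    and "2 * m_int E C2 + m_ext E C2 > 0"
  shows "persistence E (C1 \<union> C2) - (persistence E C1 + persistence E C2) > 0
    \<longleftrightarrow> real (m_cross E C1 C2) >
        (2 * real (m_int E C2) + real (m_ext E C2)) / (2 * real (m_int E C1) + real (m_ext E C1))
          * real (m_int E C1)
      + (2 * real (m_int E C1) + real (m_ext E C1)) / (2 * real (m_int E C2) + real (m_ext E C2))
          * real (m_int E C2)"
proof -
  have vol: "2 * real (m_int E C) + real (m_ext E C) = real (volume E C)" for C
    by (simp add: volume_def)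
  have "real (volume E C1) > 0" "real (volume E C2) > 0"
    using assms(8,9) unfolding volume_def of_nat_0_less_iff .
  then show ?thesis
    unfolding vol persistence_Un_disjoint_diff[OF assms(1,5)] by (rule merge_gain_pos_iff)
qed

end
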